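(* Let $\mathcal{A}\in\mathbb{R}^{n\times n\times n}$ and $\mathcal{E}\in\mathbb{R}^{n\times n\times n}$ be such that $\mathcal{A}$ and $\tilde{\mathcal{A}}=\mathcal{A}+\mathcal{E}$ are piezoelectric-type tensors. Let $E=\big(\mathcal{E}(1,:,:),\ \cdots,\ \mathcal{E}(n,:,:)\big)$ be the block matrix whose $i$-th block is the $n\times n$ matrix $\mathcal{E}(i,:,:)$. Then $$\lambda_{C\max}(\mathcal{A})-\|E\|_2\le \lambda_{C\max}(\tilde{\mathcal{A}})\le \lambda_{C\max}(\mathcal{A})+\|E\|_2.$$
   Context: A tensor $\mathcal{A}=(a_{ijk})\in\mathbb{R}^{n\times n\times n}$ is piezoelectric-type if $a_{ijk}=a_{ikj}$ for all $i,j,k$. For $i\in\{1,\dots,n\}$, $\mathcal{E}(i,:,:)$ denotes the $n\times n$ (symmetric) matrix whose $(j,k)$ entry is $\varepsilon_{ijk}$, where $\mathcal{E}=(\varepsilon_{ijk})$. $\|\cdot\|_2$ is the matrix spectral norm (largest singular value). For a piezoelectric-type tensor $\mathcal{A}$, $\lambda_{C\max}(\mathcal{A})=\max\{\sum_{i,j,k}a_{ijk}x_iy_jy_k:\ \mathbf{x},\mathbf{y}\in\mathbb{R}^n,\ \mathbf{x}^T\mathbf{x}=1,\ \mathbf{y}^T\mathbf{y}=1\}$, which is the largest $C$-eigenvalue of $\mathcal{A}$ (a $C$-eigenvalue being a real $\lambda$ with unit $\mathbf{x},\mathbf{y}$ satisfying $\sum_{j,k}a_{ijk}y_jy_k=\lambda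 x_i$ and $\sum_{j,k}a_{jki}x_jy_k=\lambda y_i$ for all $i$). *)

theory Defs
  imports "HOL-Analysis.Analysis"
begin

text \<open>Third-order tensors in R^{n x n x n}: entry a_ijk is A$i$j$k.\<close>
type_synonym 'n tensor3 = "real ^ 'n ^ 'n ^ 'n"

definition piezo_type :: "'n::finite tensor3 \<Rightarrow> bool" where
  "piezo_type A \<longleftrightarrow> (\<forall>i j k. A$i$j$k = A$i$k$j)"

definition tensor_form :: "'n::finite tensor3 \<Rightarrow> real^'n \<Rightarrow> real^'n \<Rightarrow> real" where
  "tensor_form A x y = (\<Sum>i\<in>UNIV. \<Sum>j\<in>UNIV. \<Sum>k\<in>UNIV. A$i$j$k * x$i * y$j * y$k)"

text \<open>Largest C-eigenvalue, as the maximum of the form over unit vectors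
  (the maximum is attained by compactness, so it equals the supremum).\<close>
definition lambda_Cmax :: "'n::finite tensor3 \<Rightarrow> real" where
  "lambda_Cmax A = Sup {tensor_form A x y | x y. x \<bullet> x = 1 \<and> y \<bullet> y = 1}"

text \<open>The block matrix (E(1,:,:), ..., E(n,:,:)) of size n x n^2: row j,
  column (i,k) holds E$i$j$k.\<close>
definition block_unfold :: "'n::finite tensor3 \<Rightarrow> real ^ ('n \<times> 'n) ^ 'n" where
  "block_unfold E = (\<chi> j. \<chi> p. E $ fst p $ j $ snd p)"

text \<open>Spectral norm (largest singular value) = operator norm w.r.t. Euclidean norms.\<close>
definition spectral_norm :: "real ^ 'm ^ 'k \<Rightarrow> real" where
  "spectral_norm M = onorm (\<lambda>z. M *v z)"

end

theory Submission
  imports Defs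
begin

text \<open>The form is linear in the tensor, and through the unfolding E it reads
  \<open>y \<bullet> (E *v (x \<otimes> y))\<close> with the Kronecker product \<open>x \<otimes> y\<close> of norm \<open>\<parallel>x\<parallel> \<parallel>y\<parallel>\<close>.
  Hence on unit vectors the forms of \<open>A\<close> and \<open>A + E\<close> differ by at most \<open>\<parallel>E\<parallel>\<^sub>2\<close>,
  and so do their maxima.\<close>

definition kronecker_vec :: "real ^ 'm \<Rightarrow> real ^ 'n \<Rightarrow> real ^ ('m \<times> 'n)" where
  "kronecker_vec x y = (\<chi> p. x $ fst p * y $ snd p)"

lemma sum_UNIV_prod:
  "(\<Sum>p\<in>(UNIV :: ('a::finite \<times> 'b::finite) set). f p) = (\<Sum>i\<in>UNIV. \<Sum>k\<in>UNIV. f (i, k))"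
  by (simp add: sum.cartesian_product flip: UNIV_Times_UNIV)

lemma inner_kronecker_vec:
  fixes x x' :: "real ^ 'm::finite" and y y' :: "real ^ 'n::finite"
  shows "kronecker_vec x y \<bullet> kronecker_vec x' y' = (x \<bullet> x') * (y \<bullet> y')"
  by (simp add: kronecker_vec_def inner_vec_def sum_UNIV_prod sum_product mult_ac)

lemma norm_kronecker_vec:
  fixes x :: "real ^ 'm::finite" and y :: "real ^ 'n::finite"
  shows "norm (kronecker_vec x y) = norm x * norm y"
  by (simp add: norm_eq_sqrt_inner inner_kronecker_vec real_sqrt_mult)

lemma tensor_form_eq_inner_block_unfold:
  fixes E :: "'n::finite tensor3"
  shows "tensor_form E x y = y \<bullet> (block_unfold E *v kronecker_vec x y)"
proof -
  have "y \<bullet> (block_unfold E *v kronecker_vec x y)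
      = (\<Sum>j\<in>UNIV. y$j * (\<Sum>i\<in>UNIV. \<Sum>k\<in>UNIV. E$i$j$k * (x$i * y$k)))"
    by (simp add: inner_vec_def matrix_vector_mult_def block_unfold_def kronecker_vec_def
        sum_UNIV_prod)
  also have "\<dots> = (\<Sum>j\<in>UNIV. \<Sum>i\<in>UNIV. \<Sum>k\<in>UNIV. E$i$j$k * x$i * y$j * y$k)"
    by (simp add: sum_distrib_left mult_ac)
  also have "\<dots> = tensor_form E x y"
    unfolding tensor_form_def by (rule sum.swap)
  finally show ?thesis by simp
qed

lemma abs_tensor_form_le:
  fixes E :: "'n::finite tensor3"
  shows "\<bar>tensor_form E x y\<bar> \<le> spectral_norm (block_unfold E) * norm x * (norm y)\<^sup>2"
proof -
  let ?z = "kronecker_vec x y"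
  have "\<bar>tensor_form E x y\<bar> \<le> norm y * norm (block_unfold E *v ?z)"
    unfolding tensor_form_eq_inner_block_unfold by (rule Cauchy_Schwarz_ineq2)
  also have "\<dots> \<le> norm y * (spectral_norm (block_unfold E) * norm ?z)"
    unfolding spectral_norm_def
    by (intro mult_left_mono onorm matrix_vector_mul_bounded_linear) simp
  also have "\<dots> = spectral_norm (block_unfold E) * norm x * (norm y)\<^sup>2"
    by (simp add: norm_kronecker_vec power2_eq_square)
  finally show ?thesis .
qed

lemma abs_tensor_form_unit_le:
  fixes E :: "'n::finite tensor3"
  assumes "x \<bullet> x = 1" "y \<bullet> y = 1"
  shows "\<bar>tensor_form E x y\<bar> \<le> spectral_norm (block_unfold E)"
  using abs_tensor_form_le[of E x y] assms by (simp add: norm_eq_sqrt_inner)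

lemma tensor_form_add: "tensor_form (A + B) x y = tensor_form A x y + tensor_form B x y"
  by (simp add: tensor_form_def distrib_right sum.distrib)

lemma unit_tensor_forms_nonempty:
  "{tensor_form (A::'n::finite tensor3) x y | x y. x \<bullet> x = 1 \<and> y \<bullet> y = 1} \<noteq> {}"
proof -
  have "axis (undefined :: 'n) (1::real) \<bullet> axis undefined 1 = 1"
    by (simp add: inner_axis_axis)
  then show ?thesis by blast
qed

lemma unit_tensor_forms_bdd_above:
  "bdd_above {tensor_form (A::'n::finite tensor3) x y | x y. x \<bullet> x = 1 \<and> y \<bullet> y = 1}"
  unfolding bdd_above_def using abs_tensor_form_unit_le[of _ _ A] by (fastforce simp: abs_le_iff)

lemma tensor_form_le_lambda_Cmax:
  "x \<bullet> x = 1 \<Longrightarrow> y \<bullet> y = 1 \<Longrightarrow> tensor_form A x y \<le> lambda_Cmax A"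
  unfolding lambda_Cmax_def by (rule cSup_upper[OF _ unit_tensor_forms_bdd_above]) blast

lemma lambda_Cmax_le_add:
  fixes A B :: "'n::finite tensor3"
  assumes "\<And>x y. x \<bullet> x = 1 \<Longrightarrow> y \<bullet> y = 1 \<Longrightarrow> tensor_form B x y \<le> tensor_form A x y + c"
  shows "lambda_Cmax B \<le> lambda_Cmax A + c"
  unfolding lambda_Cmax_def[of B]
proof (rule cSup_least[OF unit_tensor_forms_nonempty])
  fix t assume "t \<in> {tensor_form B x y | x y. x \<bullet> x = 1 \<and> y \<bullet> y = 1}"
  then obtain x y where "x \<bullet> x = 1" "y \<bullet> y = 1" "t = tensor_form B x y" by blast
  then show "t \<le> lambda_Cmax A + c"
    using assms tensor_form_le_lambda_Cmax[of x y A] by fastforce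
qed

theorem corollary2p1:
  fixes A E :: "'n::finite tensor3"
  assumes "piezo_type A" and "piezo_type (A + E)"
  shows "lambda_Cmax A - spectral_norm (block_unfold E) \<le> lambda_Cmax (A + E)
       \<and> lambda_Cmax (A + E) \<le> lambda_Cmax A + spectral_norm (block_unfold E)"
proof -
  have close: "\<bar>tensor_form (A + E) x y - tensor_form A x y\<bar> \<le> spectral_norm (block_unfold E)"
    if "x \<bullet> x = 1" "y \<bullet> y = 1" for x y
    using abs_tensor_form_unit_le[OF that, of E] by (simp add: tensor_form_add)
  have "lambda_Cmax A \<le> lambda_Cmax (A + E) + spectral_norm (block_unfold E)"
    by (rule lambda_Cmax_le_add) (use close in fastforce)
  moreover have "lambda_Cmax (A + E) \<le> lambda_Cmax A + spectral_norm (block_unfold E)"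
    by (rule lambda_Cmax_le_add) (use close in fastforce)
  ultimately show ?thesis by linarith
qed

end
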